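(* Let $d\ge1$, $p\ge1$, $\sigma>0$ and let $F$, $U$ satisfy the standing assumption of the context. Then the mapping $\Phi:\mathcal P_p(\mathbb R^d)\to\mathcal P_p(\mathbb R^d)$ is $1/p$-Hölder continuous with respect to $\mathcal W_p$, i.e. there is $K>0$ with $\mathcal W_p(\Phi(m),\Phi(m'))\le K\,\mathcal W_p(m,m')^{1/p}$ for all $m,m'\in\mathcal P_p(\mathbb R^d)$.
   Context: $\mathcal P(\mathbb R^d)$ denotes the Borel probability measures on $\mathbb R^d$, $\mathcal P_p(\mathbb R^d)$ those with finite $p$-th moment, $\mathcal W_p$ the $p$-Wasserstein distance. Standing assumption: (a) $F:\mathcal P(\mathbb R^d)\to\mathbb R$ is non-negative and there is a continuous function $\frac{\delta F}{\delta m}:\mathcal P(\mathbb R^d)\times\mathbb R^d\to\mathbb R$ such that for all $m_0,m_1$, $F(m_1)-F(m_0)=\int_0^1\int\frac{\delta F}{\delta m}(m_\lambda,x)\,(m_1-m_0)(dx)\,d\lambda$ with $m_\lambda=(1-\lambda)m_0+\lambda m_1$; and there are $L_F,M_F>0$ with $|\frac{\delta F}{\delta m}(m,x)-\frac{\delta F}{\delta m}(m',x')|\le L_F(\mathcal W_p(m,m')+|x-x'|)$ and $|\frac{\delta F}{\delta m}(m,x)|\le M_F$ for all $m,m',x,x'$. (b) $U:\mathbb R^d\to\mathbb R$ is measurable, $\int e^{-U}dx=1$, $\operatorname{ess\,inf}U>-\infty$, $\liminf_{|x|\to\infty}U(x)/|x|^p>0$. $g$ has density $e^{-U}$ and $H(\mu|g)=\int\log\frac{d\mu}{dg}d\mu$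 if $\mu\ll g$, $+\infty$ otherwise. $\Phi(m)$ is the unique minimizer over $\mu\in\mathcal P(\mathbb R^d)$ of $\int\frac{\delta F}{\delta m}(m,x)\mu(dx)+\frac{\sigma^2}{2}H(\mu|g)$, i.e. the probability measure with density proportional to $\exp(-\frac{2}{\sigma^2}\frac{\delta F}{\delta m}(m,x)-U(x))$. *)

theory Defs
  imports "HOL-Probability.Probability"
begin

definition prob_borel :: "'a::euclidean_space measure \<Rightarrow> bool" where
  "prob_borel m \<longleftrightarrow> prob_space m \<and> sets m = sets borel"

definition prob_p :: "real \<Rightarrow> 'a::euclidean_space measure \<Rightarrow> bool" where
  "prob_p p m \<longleftrightarrow> prob_borel m \<and> (\<integral>\<^sup>+ x. ennreal (norm x powr p) \<partial>m) < \<infinity>"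

definition couplings :: "'a::euclidean_space measure \<Rightarrow> 'a measure \<Rightarrow> ('a \<times> 'a) measure set" where
  "couplings \<mu> \<nu> = {\<pi>. prob_space \<pi> \<and> sets \<pi> = sets borel \<and>
      distr \<pi> borel fst = \<mu> \<and> distr \<pi> borel snd = \<nu>}"

definition wass :: "real \<Rightarrow> 'a::euclidean_space measure \<Rightarrow> 'a measure \<Rightarrow> ennreal" where
  "wass p \<mu> \<nu> =
     (let c = (INF \<pi>\<in>couplings \<mu> \<nu>. \<integral>\<^sup>+ z. ennreal (dist (fst z) (snd z) powr p) \<partial>\<pi>)
      in if c = \<infinity> then \<infinity> else ennreal (enn2real c powr (1 / p)))"

definition mix :: "real \<Rightarrow> 'a::euclidean_space measure \<Rightarrow> 'a measure \<Rightarrow> 'a measure" where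
  "mix l m0 m1 = measure_of UNIV (sets borel)
      (\<lambda>A. ennreal (1 - l) * emeasure m0 A + ennreal l * emeasure m1 A)"

definition weak_conv :: "(nat \<Rightarrow> 'a::euclidean_space measure) \<Rightarrow> 'a measure \<Rightarrow> bool" where
  "weak_conv ms m \<longleftrightarrow> (\<forall>f::'a \<Rightarrow> real. continuous_on UNIV f \<and> bounded (range f) \<longrightarrow>
      (\<lambda>n. \<integral> x. f x \<partial>(ms n)) \<longlonglongrightarrow> (\<integral> x. f x \<partial>m))"

definition Phi :: "real \<Rightarrow> ('a::euclidean_space measure \<Rightarrow> 'a \<Rightarrow> real) \<Rightarrow> ('a \<Rightarrow> real)
                   \<Rightarrow> 'a measure \<Rightarrow> 'a measure" where
  "Phi \<sigma> dF U m =
     (let Z = (\<integral> x. exp (- (2 / \<sigma>\<^sup>2) * dF m x - U x) \<partial>lborel)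
      in density lborel (\<lambda>x. ennreal (exp (- (2 / \<sigma>\<^sup>2) * dF m x - U x) / Z)))"

end

(*
  Phi(m) is the Gibbs measure with density proportional to exp (V m - U), where
  V m = -(2 / sigma^2) dF(m, _) is bounded by B = 2 M_F / sigma^2 uniformly in m.  Hence all
  densities of Phi(m) are dominated by exp (2 B) exp (-U), whose p-th moment is finite by the
  growth of U, and the densities of Phi(m) and Phi(m') differ pointwise by at most
  C |V m - V m'| exp (-U) <= C L W_p(m, m') exp (-U).

  Two probability densities f, g are coupled by keeping their common part min f g on the
  diagonal and transporting the excess (f - g)^+ onto the deficit (g - f)^+ by a product
  measure; since |x - y|^p <= 2^p (|x|^p + |y|^p), this gives
  W_p(f, g)^p <= 2^p * integral of |x|^p |f - g|.  Combining,
  W_p(Phi(m), Phi(m'))^p <= const * W_p(m, m'), which is the 1/p-Hoelder bound.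
*)
theory Submission
  imports Defs
begin

definition add_measure :: "'a measure \<Rightarrow> 'a measure \<Rightarrow> 'a measure" where
  "add_measure M N = measure_of (space M) (sets M) (\<lambda>A. emeasure M A + emeasure N A)"

lemma
  assumes "sets N = sets M"
  shows space_add_measure[simp]: "space (add_measure M N) = space M"
    and sets_add_measure[simp]: "sets (add_measure M N) = sets M"
    and emeasure_add_measure:
      "A \<in> sets M \<Longrightarrow> emeasure (add_measure M N) A = emeasure M A + emeasure N A"
proof -
  show "space (add_measure M N) = space M" "sets (add_measure M N) = sets M"
    by (simp_all add: add_measure_def)
  assume A: "A \<in> sets M"
  have "countably_additive (sets M) (\<lambda>A. emeasure M A + emeasure N A)"
  proof (rule countably_additiveI)
    fix F :: "nat \<Rightarrow> 'a set"
    assume "range F \<subseteq> sets M" "disjoint_family F"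
    then show "(\<Sum>i. emeasure M (F i) + emeasure N (F i)) = emeasure M (\<Union>i. F i) + emeasure N (\<Union>i. F i)"
      using assms by (simp add: suminf_add[symmetric] suminf_emeasure)
  qed
  then show "emeasure (add_measure M N) A = emeasure M A + emeasure N A"
    unfolding add_measure_def
    by (intro emeasure_measure_of_sigma[OF sets.sigma_algebra_axioms _ _ A]) (auto simp: positive_def)
qed

lemma nn_integral_add_measure:
  assumes N: "sets N = sets M" and f: "f \<in> borel_measurable M"
  shows "(\<integral>\<^sup>+ x. f x \<partial>add_measure M N) = (\<integral>\<^sup>+ x. f x \<partial>M) + (\<integral>\<^sup>+ x. f x \<partial>N)"
proof -
  have meas: "g \<in> borel_measurable N" "g \<in> borel_measurable (add_measure M N)"
    if "g \<in> borel_measurable M" for g :: "'a \<Rightarrow> ennreal"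
    using that by (simp_all add: measurable_cong_sets[OF N refl] measurable_cong_sets[OF sets_add_measure[OF N] refl])
  have spaces: "space N = space M" "space (add_measure M N) = space M"
    using sets_eq_imp_space_eq[OF N] N by simp_all
  from f show ?thesis
  proof (induction rule: borel_measurable_induct)
    case (cong f g)
    then have "(\<integral>\<^sup>+ x. f x \<partial>K) = (\<integral>\<^sup>+ x. g x \<partial>K)" if "K \<in> {M, N, add_measure M N}" for K
      using that spaces by (intro nn_integral_cong) auto
    with cong.IH show ?case by simp
  next
    case (set A)
    then show ?case
      using N emeasure_add_measure[OF N] by (simp add: nn_integral_indicator)
  next
    case (mult u c)
    note u = mult.hyps(2) meas[OF mult.hyps(2)]
    show ?case
      by (simp only: nn_integral_cmult[OF u(1)] nn_integral_cmult[OF u(2)]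
          nn_integral_cmult[OF u(3)] mult.IH distrib_left)
  next
    case (add u v)
    note u = add.hyps(1) meas[OF add.hyps(1)] and v = add.hyps(3) meas[OF add.hyps(3)]
    show ?case
      unfolding nn_integral_add[OF v(1) u(1)] nn_integral_add[OF v(2) u(2)]
        nn_integral_add[OF v(3) u(3)] add.IH
      by (simp add: ac_simps)
  next
    case (seq U)
    have "(\<integral>\<^sup>+ x. (SUP i. U i) x \<partial>K) = (SUP i. \<integral>\<^sup>+ x. U i x \<partial>K)"
      if "\<And>i. U i \<in> borel_measurable K" for K
      unfolding SUP_apply by (rule nn_integral_monotone_convergence_SUP[OF seq.hyps(3) that])
    note SUP_eq = this[OF seq.hyps(1)] this[OF meas(1)[OF seq.hyps(1)]] this[OF meas(2)[OF seq.hyps(1)]]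
    have "(SUP i. (\<integral>\<^sup>+ x. U i x \<partial>M) + (\<integral>\<^sup>+ x. U i x \<partial>N))
        = (SUP i. \<integral>\<^sup>+ x. U i x \<partial>M) + (SUP i. \<integral>\<^sup>+ x. U i x \<partial>N)"
      by (intro ennreal_SUP_add incseq_nn_integral seq.hyps(3))
    then show ?case
      unfolding SUP_eq seq.IH .
  qed
qed

lemma measurable_fst_borel[measurable]:
  "fst \<in> borel_measurable (borel :: ('a::second_countable_topology \<times> 'b::second_countable_topology) measure)"
  by (subst borel_prod[symmetric]) (rule measurable_fst)

lemma measurable_snd_borel[measurable]:
  "snd \<in> borel_measurable (borel :: ('a::second_countable_topology \<times> 'b::second_countable_topology) measure)"
  by (subst borel_prod[symmetric]) (rule measurable_snd)

lemma sets_lborel_pair: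
  "sets (lborel \<Otimes>\<^sub>M lborel :: ('a::euclidean_space \<times> 'b::euclidean_space) measure) = sets borel"
  by (subst lborel_prod) simp

text \<open>In \<open>ennreal\<close>, \<open>c / c = 0\<close> for \<open>c = 0\<close>; the identity survives because then \<open>u = 0\<close> a.e.\<close>

lemma nn_integral_mult_divide_total_mass:
  assumes [measurable]: "u \<in> borel_measurable M" and finite: "(\<integral>\<^sup>+ x. u x \<partial>M) \<noteq> \<top>"
  shows "(\<integral>\<^sup>+ x. u x * v x \<partial>M) * (\<integral>\<^sup>+ x. u x \<partial>M) / (\<integral>\<^sup>+ x. u x \<partial>M) = (\<integral>\<^sup>+ x. u x * v x \<partial>M)"
proof (cases "(\<integral>\<^sup>+ x. u x \<partial>M) = 0")
  case True
  then have "AE x in M. u x * v x = 0"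
    by (auto simp: nn_integral_0_iff_AE elim!: eventually_mono)
  then have "(\<integral>\<^sup>+ x. u x * v x \<partial>M) = 0"
    by (subst nn_integral_cong_AE[where v="\<lambda>_. 0"]) auto
  then show ?thesis by simp
next
  case False
  with finite show ?thesis
    by (simp add: ennreal_times_divide[symmetric] top.not_eq_extremum)
qed

lemma borel_measurable_sequentially_continuous:
  fixes f :: "'a::{first_countable_topology, t2_space} \<Rightarrow> 'b::topological_space"
  assumes "\<And>xs x. xs \<longlonglongrightarrow> x \<Longrightarrow> (\<lambda>n. f (xs n)) \<longlonglongrightarrow> f x"
  shows "f \<in> borel_measurable borel"
  by (intro borel_measurable_continuous_onI continuous_at_imp_continuous_on ballI continuous_at_sequentiallyI assms)

lemma ennreal_le_mult_imp_le_enn2real: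
  assumes "ennreal a \<le> ennreal L * W" "W \<noteq> \<top>" "L \<ge> 0"
  shows "a \<le> L * enn2real W"
proof -
  have "ennreal L * W = ennreal (L * enn2real W)"
    using assms(2,3) by (simp add: ennreal_mult ennreal_enn2real_if)
  with assms show ?thesis
    by (simp add: ennreal_le_iff)
qed

lemma distr_eq_densityI:
  assumes T: "T \<in> measurable M borel" and [measurable]: "f \<in> borel_measurable borel"
    and eq: "\<And>A. A \<in> sets borel \<Longrightarrow> (\<integral>\<^sup>+ z. indicator A (T z) \<partial>M) = (\<integral>\<^sup>+ x. f x * indicator A x \<partial>lborel)"
  shows "distr M borel T = density lborel f"
proof (rule measure_eqI)
  fix A assume "A \<in> sets (distr M borel T)"
  then have [measurable]: "A \<in> sets borel" by simp
  have "emeasure (distr M borel T) A = (\<integral>\<^sup>+ x. indicator A x \<partial>distr M borel T)"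
    by simp
  also have "\<dots> = (\<integral>\<^sup>+ z. indicator A (T z) \<partial>M)"
    by (rule nn_integral_distr[OF T]) simp
  also have "\<dots> = emeasure (density lborel f) A"
    by (simp add: eq emeasure_density)
  finally show "emeasure (distr M borel T) A = emeasure (density lborel f) A" .
qed simp

lemma dist_powr_le:
  fixes x y :: "'a::real_normed_vector"
  assumes "p \<ge> 0"
  shows "dist x y powr p \<le> 2 powr p * (norm x powr p + norm y powr p)"
proof -
  have "dist x y \<le> 2 * max (norm x) (norm y)"
    using norm_triangle_ineq4[of x y] by (simp add: dist_norm)
  then have "dist x y powr p \<le> 2 powr p * max (norm x) (norm y) powr p"
    using assms by (metis powr_mono2 powr_mult zero_le_dist max.coboundedI1 norm_ge_zero zero_le_numeral)
  also have "\<dots> \<le> 2 powr p * (norm x powr p + norm y powr p)"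
    by (intro mult_left_mono) (auto simp: max_def)
  finally show ?thesis .
qed

lemma nn_integral_dist_powr_le:
  fixes \<pi> :: "('a::euclidean_space \<times> 'a) measure"
  assumes [measurable_cong]: "sets \<pi> = sets borel" and p: "p \<ge> 0"
  shows "(\<integral>\<^sup>+ z. ennreal (dist (fst z) (snd z) powr p) \<partial>\<pi>) \<le>
    ennreal (2 powr p) * ((\<integral>\<^sup>+ z. ennreal (norm (fst z) powr p) \<partial>\<pi>) + (\<integral>\<^sup>+ z. ennreal (norm (snd z) powr p) \<partial>\<pi>))"
proof -
  have "(\<integral>\<^sup>+ z. ennreal (dist (fst z) (snd z) powr p) \<partial>\<pi>) \<le>
      (\<integral>\<^sup>+ z. ennreal (2 powr p) * (ennreal (norm (fst z) powr p) + ennreal (norm (snd z) powr p)) \<partial>\<pi>)"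
  proof (intro nn_integral_mono)
    fix z :: "'a \<times> 'a"
    have "ennreal (dist (fst z) (snd z) powr p) \<le> ennreal (2 powr p * (norm (fst z) powr p + norm (snd z) powr p))"
      using dist_powr_le[OF p] by (rule ennreal_leI)
    then show "ennreal (dist (fst z) (snd z) powr p) \<le>
        ennreal (2 powr p) * (ennreal (norm (fst z) powr p) + ennreal (norm (snd z) powr p))"
      by (simp add: ennreal_mult ennreal_plus)
  qed
  then show ?thesis
    by (simp add: nn_integral_cmult nn_integral_add)
qed

section \<open>The maximal coupling of two probability densities\<close>

text \<open>The common mass \<open>min f g\<close> stays on the diagonal; the excess \<open>(f - g)\<^sup>+\<close> is sent to the
  deficit \<open>(g - f)\<^sup>+\<close> by the product measure, normalised by the total excess.\<close>

definition excess_coupling :: "('a::euclidean_space \<Rightarrow> real) \<Rightarrow> ('a \<Rightarrow> real) \<Rightarrow> ('a \<times> 'a) measure" where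
  "excess_coupling f g = density (lborel \<Otimes>\<^sub>M lborel) (\<lambda>z.
     ennreal (f (fst z) - g (fst z)) * ennreal (g (snd z) - f (snd z)) / (\<integral>\<^sup>+ x. ennreal (f x - g x) \<partial>lborel))"

definition maximal_coupling :: "('a::euclidean_space \<Rightarrow> real) \<Rightarrow> ('a \<Rightarrow> real) \<Rightarrow> ('a \<times> 'a) measure" where
  "maximal_coupling f g =
     add_measure (distr (density lborel (\<lambda>x. ennreal (min (f x) (g x)))) borel (\<lambda>x. (x, x))) (excess_coupling f g)"

lemma sets_excess_coupling[simp, measurable_cong]: "sets (excess_coupling f g) = sets borel"
  unfolding excess_coupling_def by (simp only: sets_density sets_lborel_pair)

lemma sets_maximal_coupling[simp, measurable_cong]: "sets (maximal_coupling f g) = sets borel"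
  unfolding maximal_coupling_def by (subst sets_add_measure) simp_all

locale prob_density_pair =
  fixes f g :: "'a::euclidean_space \<Rightarrow> real"
  assumes measurable_f[measurable]: "f \<in> borel_measurable borel"
    and measurable_g[measurable]: "g \<in> borel_measurable borel"
    and f_nonneg: "\<And>x. f x \<ge> 0" and g_nonneg: "\<And>x. g x \<ge> 0"
    and nn_integral_f: "(\<integral>\<^sup>+ x. ennreal (f x) \<partial>lborel) = 1"
    and nn_integral_g: "(\<integral>\<^sup>+ x. ennreal (g x) \<partial>lborel) = 1"
begin

lemma nn_integral_f_split:
  assumes [measurable]: "H \<in> borel_measurable borel"
  shows "(\<integral>\<^sup>+ x. ennreal (f x) * H x \<partial>lborel) =
    (\<integral>\<^sup>+ x. ennreal (min (f x) (g x)) * H x \<partial>lborel) + (\<integral>\<^sup>+ x. ennreal (f x - g x) * H x \<partial>lborel)"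
proof -
  have "ennreal (f x) = ennreal (min (f x) (g x)) + ennreal (f x - g x)" for x
    using f_nonneg[of x] g_nonneg[of x] by (cases "f x \<le> g x") (simp_all add: ennreal_plus[symmetric] ennreal_eq_0_iff)
  then show ?thesis
    by (simp add: distrib_right nn_integral_add)
qed

lemma nn_integral_g_split:
  assumes [measurable]: "H \<in> borel_measurable borel"
  shows "(\<integral>\<^sup>+ x. ennreal (g x) * H x \<partial>lborel) =
    (\<integral>\<^sup>+ x. ennreal (min (f x) (g x)) * H x \<partial>lborel) + (\<integral>\<^sup>+ x. ennreal (g x - f x) * H x \<partial>lborel)"
proof -
  have "ennreal (g x) = ennreal (min (f x) (g x)) + ennreal (g x - f x)" for x
    using f_nonneg[of x] g_nonneg[of x] by (cases "f x \<le> g x") (simp_all add: ennreal_plus[symmetric] ennreal_eq_0_iff)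
  then show ?thesis
    by (simp add: distrib_right nn_integral_add)
qed

lemma excess_mass_finite: "(\<integral>\<^sup>+ x. ennreal (f x - g x) \<partial>lborel) \<noteq> \<top>"
  using nn_integral_f_split[of "\<lambda>_. 1"] nn_integral_f by auto

lemma excess_mass_symmetric: "(\<integral>\<^sup>+ x. ennreal (g x - f x) \<partial>lborel) = (\<integral>\<^sup>+ x. ennreal (f x - g x) \<partial>lborel)"
proof -
  have "(\<integral>\<^sup>+ x. ennreal (min (f x) (g x)) \<partial>lborel) \<noteq> \<top>"
    using nn_integral_f_split[of "\<lambda>_. 1"] nn_integral_f by auto
  moreover have "(\<integral>\<^sup>+ x. ennreal (min (f x) (g x)) \<partial>lborel) + (\<integral>\<^sup>+ x. ennreal (g x - f x) \<partial>lborel) =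
      (\<integral>\<^sup>+ x. ennreal (min (f x) (g x)) \<partial>lborel) + (\<integral>\<^sup>+ x. ennreal (f x - g x) \<partial>lborel)"
    using nn_integral_f_split[of "\<lambda>_. 1"] nn_integral_g_split[of "\<lambda>_. 1"] nn_integral_f nn_integral_g
    by simp
  ultimately show ?thesis
    by (simp add: ennreal_add_left_cancel)
qed

lemma nn_integral_fst_excess_coupling:
  assumes [measurable]: "H \<in> borel_measurable borel"
  shows "(\<integral>\<^sup>+ z. H (fst z) \<partial>excess_coupling f g) = (\<integral>\<^sup>+ x. ennreal (f x - g x) * H x \<partial>lborel)"
proof -
  let ?e = "\<integral>\<^sup>+ x. ennreal (f x - g x) \<partial>lborel"
  have "(\<integral>\<^sup>+ y. ennreal (f x - g x) * ennreal (g y - f y) / ?e * H x \<partial>lborel) =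
      ennreal (f x - g x) * H x * ?e / ?e" for x
  proof -
    have "(\<integral>\<^sup>+ y. ennreal (f x - g x) * ennreal (g y - f y) / ?e * H x \<partial>lborel) =
        (\<integral>\<^sup>+ y. ennreal (f x - g x) * H x / ?e * ennreal (g y - f y) \<partial>lborel)"
      by (simp add: mult_ac divide_ennreal_def)
    also have "\<dots> = ennreal (f x - g x) * H x / ?e * ?e"
      by (simp add: nn_integral_cmult excess_mass_symmetric)
    finally show ?thesis
      by (simp add: mult_ac divide_ennreal_def)
  qed
  then have "(\<integral>\<^sup>+ z. H (fst z) \<partial>excess_coupling f g) =
      (\<integral>\<^sup>+ x. ennreal (f x - g x) * H x \<partial>lborel) * ?e / ?e"
    unfolding excess_coupling_def
    by (simp add: nn_integral_density lborel.nn_integral_fst[symmetric] nn_integral_divide nn_integral_multc)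
  also have "\<dots> = (\<integral>\<^sup>+ x. ennreal (f x - g x) * H x \<partial>lborel)"
    by (rule nn_integral_mult_divide_total_mass) (simp_all add: excess_mass_finite)
  finally show ?thesis .
qed

lemma nn_integral_snd_excess_coupling:
  assumes [measurable]: "H \<in> borel_measurable borel"
  shows "(\<integral>\<^sup>+ z. H (snd z) \<partial>excess_coupling f g) = (\<integral>\<^sup>+ y. ennreal (g y - f y) * H y \<partial>lborel)"
proof -
  let ?e = "\<integral>\<^sup>+ x. ennreal (f x - g x) \<partial>lborel"
  let ?I = "\<integral>\<^sup>+ y. ennreal (g y - f y) * H y \<partial>lborel"
  have "(\<integral>\<^sup>+ y. ennreal (f x - g x) * ennreal (g y - f y) / ?e * H y \<partial>lborel) =
      (\<integral>\<^sup>+ y. ennreal (f x - g x) * (ennreal (g y - f y) * H y / ?e) \<partial>lborel)" for x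
    by (simp add: mult_ac divide_ennreal_def)
  then have "(\<integral>\<^sup>+ z. H (snd z) \<partial>excess_coupling f g) = (\<integral>\<^sup>+ x. ennreal (f x - g x) * (?I / ?e) \<partial>lborel)"
    unfolding excess_coupling_def
    by (simp add: nn_integral_density lborel.nn_integral_fst[symmetric] nn_integral_cmult nn_integral_divide)
  also have "\<dots> = ?I * ?e / ?e"
    by (simp add: nn_integral_multc) (simp add: ennreal_times_divide mult.commute)
  also have "\<dots> = ?I"
    using nn_integral_mult_divide_total_mass[of "\<lambda>y. ennreal (g y - f y)" lborel H]
    by (simp add: excess_mass_finite excess_mass_symmetric)
  finally show ?thesis .
qed

lemma nn_integral_maximal_coupling:
  assumes [measurable]: "G \<in> borel_measurable borel"
  shows "(\<integral>\<^sup>+ z. G z \<partial>maximal_coupling f g) =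
    (\<integral>\<^sup>+ x. ennreal (min (f x) (g x)) * G (x, x) \<partial>lborel) + (\<integral>\<^sup>+ z. G z \<partial>excess_coupling f g)"
  unfolding maximal_coupling_def
  by (subst nn_integral_add_measure) (simp_all add: nn_integral_distr nn_integral_density)

lemma nn_integral_fst_maximal_coupling:
  assumes [measurable]: "H \<in> borel_measurable borel"
  shows "(\<integral>\<^sup>+ z. H (fst z) \<partial>maximal_coupling f g) = (\<integral>\<^sup>+ x. ennreal (f x) * H x \<partial>lborel)"
  by (simp add: nn_integral_maximal_coupling nn_integral_fst_excess_coupling nn_integral_f_split)

lemma nn_integral_snd_maximal_coupling:
  assumes [measurable]: "H \<in> borel_measurable borel"
  shows "(\<integral>\<^sup>+ z. H (snd z) \<partial>maximal_coupling f g) = (\<integral>\<^sup>+ x. ennreal (g x) * H x \<partial>lborel)"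
  by (simp add: nn_integral_maximal_coupling nn_integral_snd_excess_coupling nn_integral_g_split)

lemma maximal_coupling_couplings:
  "maximal_coupling f g \<in> couplings (density lborel (\<lambda>x. ennreal (f x))) (density lborel (\<lambda>x. ennreal (g x)))"
proof -
  have "emeasure (maximal_coupling f g) (space (maximal_coupling f g)) = 1"
    using nn_integral_fst_maximal_coupling[of "\<lambda>_. 1"] nn_integral_f
    by (simp add: sets_eq_imp_space_eq[OF sets_maximal_coupling])
  moreover have "distr (maximal_coupling f g) borel fst = density lborel (\<lambda>x. ennreal (f x))"
    by (rule distr_eq_densityI) (simp_all add: nn_integral_fst_maximal_coupling)
  moreover have "distr (maximal_coupling f g) borel snd = density lborel (\<lambda>x. ennreal (g x))"
    by (rule distr_eq_densityI) (simp_all add: nn_integral_snd_maximal_coupling)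
  ultimately show ?thesis
    unfolding couplings_def by (simp add: prob_spaceI)
qed

lemma nn_integral_dist_powr_maximal_coupling_le:
  assumes p: "p \<ge> 0"
  shows "(\<integral>\<^sup>+ z. ennreal (dist (fst z) (snd z) powr p) \<partial>maximal_coupling f g) \<le>
    ennreal (2 powr p) * (\<integral>\<^sup>+ x. ennreal (norm x powr p * \<bar>f x - g x\<bar>) \<partial>lborel)"
proof -
  have "(\<integral>\<^sup>+ z. ennreal (dist (fst z) (snd z) powr p) \<partial>maximal_coupling f g) =
      (\<integral>\<^sup>+ z. ennreal (dist (fst z) (snd z) powr p) \<partial>excess_coupling f g)"
    \<comment> \<open>the diagonal part costs nothing, as \<open>0 powr p = 0\<close> even for \<open>p = 0\<close>\<close>
    by (simp add: nn_integral_maximal_coupling)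
  also have "\<dots> \<le> ennreal (2 powr p) * ((\<integral>\<^sup>+ x. ennreal (f x - g x) * ennreal (norm x powr p) \<partial>lborel) +
      (\<integral>\<^sup>+ x. ennreal (g x - f x) * ennreal (norm x powr p) \<partial>lborel))"
    using nn_integral_dist_powr_le[OF sets_excess_coupling[of f g] p]
    by (simp add: nn_integral_fst_excess_coupling[of "\<lambda>x. ennreal (norm x powr p)"]
        nn_integral_snd_excess_coupling[of "\<lambda>x. ennreal (norm x powr p)"])
  also have "\<dots> = ennreal (2 powr p) * (\<integral>\<^sup>+ x. ennreal (norm x powr p * \<bar>f x - g x\<bar>) \<partial>lborel)"
  proof -
    have "ennreal (f x - g x) * ennreal (norm x powr p) + ennreal (g x - f x) * ennreal (norm x powr p) =
        ennreal (norm x powr p * \<bar>f x - g x\<bar>)" for x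
      by (cases "f x \<le> g x") (simp_all add: ennreal_mult[symmetric] ennreal_eq_0_iff mult.commute)
    then show ?thesis
      by (simp add: nn_integral_add[symmetric])
  qed
  finally show ?thesis .
qed

end

section \<open>Wasserstein distance\<close>

lemma prob_borel_space: "prob_borel m \<Longrightarrow> space m = UNIV"
  unfolding prob_borel_def by (metis sets_eq_imp_space_eq space_borel)

lemma product_coupling:
  fixes \<mu> \<nu> :: "'a::euclidean_space measure"
  assumes \<mu>: "prob_borel \<mu>" and \<nu>: "prob_borel \<nu>"
  shows "\<mu> \<Otimes>\<^sub>M \<nu> \<in> couplings \<mu> \<nu>"
proof -
  interpret \<mu>: prob_space \<mu> using \<mu> by (simp add: prob_borel_def)
  interpret \<nu>: prob_space \<nu> using \<nu> by (simp add: prob_borel_def)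
  interpret pair_prob_space \<mu> \<nu> ..
  have sets_\<mu>: "sets \<mu> = sets borel" and sets_\<nu>: "sets \<nu> = sets borel"
    using \<mu> \<nu> by (simp_all add: prob_borel_def)
  have sets_pair: "sets (\<mu> \<Otimes>\<^sub>M \<nu>) = sets borel"
    using sets_pair_measure_cong[OF sets_\<mu> sets_\<nu>] borel_prod by metis
  have "distr (\<mu> \<Otimes>\<^sub>M \<nu>) borel fst = distr (\<mu> \<Otimes>\<^sub>M \<nu>) \<mu> fst"
    by (rule distr_cong) (simp_all add: sets_\<mu>)
  then have "distr (\<mu> \<Otimes>\<^sub>M \<nu>) borel fst = \<mu>"
    using \<nu>.distr_pair_fst by simp
  moreover have "distr (\<mu> \<Otimes>\<^sub>M \<nu>) borel snd = \<nu>"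
  proof (rule measure_eqI)
    fix A assume "A \<in> sets (distr (\<mu> \<Otimes>\<^sub>M \<nu>) borel snd)"
    then have A: "A \<in> sets \<nu>" using sets_\<nu> by simp
    have "snd -` A \<inter> space (\<mu> \<Otimes>\<^sub>M \<nu>) = space \<mu> \<times> A"
      using prob_borel_space[OF \<mu>] prob_borel_space[OF \<nu>] by (auto simp: space_pair_measure)
    then have "emeasure (distr (\<mu> \<Otimes>\<^sub>M \<nu>) borel snd) A = emeasure (\<mu> \<Otimes>\<^sub>M \<nu>) (space \<mu> \<times> A)"
      using A sets_\<nu> by (simp add: emeasure_distr)
    also have "\<dots> = emeasure \<nu> A"
      by (simp add: \<nu>.emeasure_pair_measure_Times[OF sets.top A] \<mu>.emeasure_space_1)
    finally show "emeasure (distr (\<mu> \<Otimes>\<^sub>M \<nu>) borel snd) A = emeasure \<nu> A" .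
  qed (simp add: sets_\<nu>)
  ultimately show ?thesis
    unfolding couplings_def using sets_pair prob_space_axioms by simp
qed

lemma nn_integral_fst_coupling:
  assumes "\<pi> \<in> couplings \<mu> \<nu>" and [measurable]: "h \<in> borel_measurable borel"
  shows "(\<integral>\<^sup>+ z. h (fst z) \<partial>\<pi>) = (\<integral>\<^sup>+ x. h x \<partial>\<mu>)"
proof -
  have "sets \<pi> = sets borel" and marginal: "distr \<pi> borel fst = \<mu>"
    using assms(1) by (simp_all add: couplings_def)
  then have "fst \<in> measurable \<pi> borel"
    using measurable_fst_borel measurable_cong_sets by blast
  then have "(\<integral>\<^sup>+ x. h x \<partial>distr \<pi> borel fst) = (\<integral>\<^sup>+ z. h (fst z) \<partial>\<pi>)"
    by (rule nn_integral_distr) simp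
  with marginal show ?thesis
    by simp
qed

lemma nn_integral_snd_coupling:
  assumes "\<pi> \<in> couplings \<mu> \<nu>" and [measurable]: "h \<in> borel_measurable borel"
  shows "(\<integral>\<^sup>+ z. h (snd z) \<partial>\<pi>) = (\<integral>\<^sup>+ x. h x \<partial>\<nu>)"
proof -
  have "sets \<pi> = sets borel" and marginal: "distr \<pi> borel snd = \<nu>"
    using assms(1) by (simp_all add: couplings_def)
  then have "snd \<in> measurable \<pi> borel"
    using measurable_snd_borel measurable_cong_sets by blast
  then have "(\<integral>\<^sup>+ x. h x \<partial>distr \<pi> borel snd) = (\<integral>\<^sup>+ z. h (snd z) \<partial>\<pi>)"
    by (rule nn_integral_distr) simp
  with marginal show ?thesis
    by simp
qed

lemma nn_integral_dist_powr_coupling_le: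
  fixes \<mu> \<nu> :: "'a::euclidean_space measure"
  assumes \<pi>: "\<pi> \<in> couplings \<mu> \<nu>" and p: "p \<ge> 0"
  shows "(\<integral>\<^sup>+ z. ennreal (dist (fst z) (snd z) powr p) \<partial>\<pi>) \<le>
    ennreal (2 powr p) * ((\<integral>\<^sup>+ x. ennreal (norm x powr p) \<partial>\<mu>) + (\<integral>\<^sup>+ x. ennreal (norm x powr p) \<partial>\<nu>))"
  using nn_integral_dist_powr_le[of \<pi> p] \<pi> p
  by (simp add: couplings_def nn_integral_fst_coupling[OF \<pi>, of "\<lambda>x. ennreal (norm x powr p)"]
      nn_integral_snd_coupling[OF \<pi>, of "\<lambda>x. ennreal (norm x powr p)"])

lemma wass_le_coupling_cost:
  assumes \<pi>: "\<pi> \<in> couplings \<mu> \<nu>" and p: "p > 0" and B: "B \<ge> 0"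
    and cost: "(\<integral>\<^sup>+ z. ennreal (dist (fst z) (snd z) powr p) \<partial>\<pi>) \<le> ennreal B"
  shows "wass p \<mu> \<nu> \<noteq> \<infinity>" and "enn2real (wass p \<mu> \<nu>) \<le> B powr (1 / p)"
proof -
  define c where "c = (INF \<pi>\<in>couplings \<mu> \<nu>. \<integral>\<^sup>+ z. ennreal (dist (fst z) (snd z) powr p) \<partial>\<pi>)"
  have "c \<le> ennreal B"
    unfolding c_def using INF_lower[OF \<pi>] cost by (rule order_trans)
  then have "c \<noteq> \<infinity>" and "enn2real c \<le> B"
    using B by (auto simp: top_unique enn2real_leI)
  moreover have "wass p \<mu> \<nu> = ennreal (enn2real c powr (1 / p))"
    using \<open>c \<noteq> \<infinity>\<close> by (simp add: wass_def c_def[symmetric])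
  ultimately show "wass p \<mu> \<nu> \<noteq> \<infinity>" and "enn2real (wass p \<mu> \<nu>) \<le> B powr (1 / p)"
    using p by (simp_all add: powr_mono2)
qed

lemma wass_finite:
  fixes \<mu> \<nu> :: "'a::euclidean_space measure"
  assumes "prob_p p \<mu>" "prob_p p \<nu>" "p > 0"
  shows "wass p \<mu> \<nu> \<noteq> \<infinity>"
proof -
  have \<pi>: "\<mu> \<Otimes>\<^sub>M \<nu> \<in> couplings \<mu> \<nu>"
    using assms by (simp add: prob_p_def product_coupling)
  have "ennreal (2 powr p) * ((\<integral>\<^sup>+ x. ennreal (norm x powr p) \<partial>\<mu>) + (\<integral>\<^sup>+ x. ennreal (norm x powr p) \<partial>\<nu>)) < \<infinity>"
    using assms by (simp add: prob_p_def ennreal_mult_less_top)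
  then obtain B where "B \<ge> 0" and
    "(\<integral>\<^sup>+ z. ennreal (dist (fst z) (snd z) powr p) \<partial>\<mu> \<Otimes>\<^sub>M \<nu>) \<le> ennreal B"
    using nn_integral_dist_powr_coupling_le[OF \<pi>, of p] \<open>p > 0\<close> by (auto simp: less_top_ennreal)
  then show ?thesis
    using wass_le_coupling_cost(1)[OF \<pi> \<open>p > 0\<close>] by simp
qed

lemma (in prob_density_pair) wass_density_le:
  assumes p: "p > 0" and B: "B \<ge> 0"
    and bound: "(\<integral>\<^sup>+ x. ennreal (norm x powr p * \<bar>f x - g x\<bar>) \<partial>lborel) \<le> ennreal B"
  shows "enn2real (wass p (density lborel (\<lambda>x. ennreal (f x))) (density lborel (\<lambda>x. ennreal (g x))))
    \<le> (2 powr p * B) powr (1 / p)"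
proof (rule wass_le_coupling_cost(2)[OF maximal_coupling_couplings p])
  have "(\<integral>\<^sup>+ z. ennreal (dist (fst z) (snd z) powr p) \<partial>maximal_coupling f g) \<le> ennreal (2 powr p) * ennreal B"
    using nn_integral_dist_powr_maximal_coupling_le[of p] mult_left_mono[OF bound, of "ennreal (2 powr p)"] p
    by simp
  then show "(\<integral>\<^sup>+ z. ennreal (dist (fst z) (snd z) powr p) \<partial>maximal_coupling f g) \<le> ennreal (2 powr p * B)"
    using B by (simp add: ennreal_mult)
qed (use B in simp)

section \<open>Moments of the reference measure\<close>

lemma nn_integral_exp_neg_abs_finite:
  fixes a :: real
  assumes a: "a > 0"
  shows "(\<integral>\<^sup>+ t. ennreal (exp (- a * \<bar>t\<bar>)) \<partial>lborel) < \<infinity>"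
proof -
  let ?e = "exponential_density a"
  have [measurable]: "?e \<in> borel_measurable borel"
    by (simp add: exponential_density_def)
  have right: "(\<integral>\<^sup>+ t. ennreal (?e t) \<partial>lborel) = 1"
    using prob_space.emeasure_space_1[OF prob_space_exponential_density[OF a]]
    by (simp add: emeasure_density)
  have left: "(\<integral>\<^sup>+ t. ennreal (?e (- t)) \<partial>lborel) = 1"
    using nn_integral_real_affine[of "\<lambda>t. ennreal (?e t)" "-1" 0] right by simp
  have "ennreal (exp (- a * \<bar>t\<bar>)) \<le> ennreal (1 / a) * (ennreal (?e t) + ennreal (?e (- t)))" for t
  proof -
    have "exp (- a * \<bar>t\<bar>) \<le> 1 / a * (?e t + ?e (- t))"
      using a by (auto simp: exponential_density_def field_simps abs_if)
    then show ?thesis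
      using a by (simp add: exponential_density_def ennreal_mult[symmetric] ennreal_plus[symmetric] del: ennreal_plus)
  qed
  then have "(\<integral>\<^sup>+ t. ennreal (exp (- a * \<bar>t\<bar>)) \<partial>lborel) \<le>
      ennreal (1 / a) * ((\<integral>\<^sup>+ t. ennreal (?e t) \<partial>lborel) + (\<integral>\<^sup>+ t. ennreal (?e (- t)) \<partial>lborel))"
    by (subst nn_integral_add[symmetric]) (auto simp: nn_integral_cmult[symmetric] intro: nn_integral_mono)
  also have "\<dots> < \<infinity>"
    using left right by (simp add: ennreal_mult_less_top)
  finally show ?thesis .
qed

lemma nn_integral_exp_neg_norm_finite:
  assumes a: "a > 0"
  shows "(\<integral>\<^sup>+ x. ennreal (exp (- a * norm (x :: 'a::euclidean_space))) \<partial>lborel) < \<infinity>"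
proof -
  define b where "b = a / DIM('a)"
  have b: "b > 0"
    using a by (simp add: b_def)
  have "ennreal (exp (- a * norm x)) \<le> (\<Prod>i\<in>Basis. ennreal (exp (- b * \<bar>x \<bullet> i\<bar>)))" for x :: 'a
  proof -
    have "(\<Sum>i\<in>Basis. \<bar>x \<bullet> i\<bar>) \<le> (\<Sum>i\<in>(Basis::'a set). norm x)"
      by (intro sum_mono Basis_le_norm)
    then have "b * (\<Sum>i\<in>Basis. \<bar>x \<bullet> i\<bar>) \<le> a * norm x"
      using a by (simp add: b_def field_simps)
    then have "exp (- a * norm x) \<le> exp (\<Sum>i\<in>Basis. - b * \<bar>x \<bullet> i\<bar>)"
      by (simp add: sum_negf sum_distrib_left[symmetric])
    then have "ennreal (exp (- a * norm x)) \<le> ennreal (\<Prod>i\<in>Basis. exp (- b * \<bar>x \<bullet> i\<bar>))"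
      by (simp add: exp_sum ennreal_leI)
    then show ?thesis
      by (simp add: prod_ennreal)
  qed
  then have "(\<integral>\<^sup>+ x. ennreal (exp (- a * norm (x :: 'a))) \<partial>lborel) \<le>
      (\<integral>\<^sup>+ x. (\<Prod>i\<in>Basis. ennreal (exp (- b * \<bar>(x :: 'a) \<bullet> i\<bar>))) \<partial>lborel)"
    by (intro nn_integral_mono) auto
  also have "\<dots> = (\<Prod>i\<in>(Basis :: 'a set). \<integral>\<^sup>+ t. ennreal (exp (- b * \<bar>t\<bar>)) \<partial>lborel)"
    by (rule nn_integral_lborel_prod) auto
  also have "\<dots> < \<infinity>"
    using nn_integral_exp_neg_abs_finite[OF b] by (simp add: power_less_top_ennreal)
  finally show ?thesis .
qed

lemma mult_exp_neg_le:
  fixes c t :: real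
  assumes "c > 0" "t \<ge> 0"
  shows "t * exp (- c * t) \<le> 2 / c * exp (- c / 2 * t)"
proof -
  have "t \<le> 2 / c * exp (c / 2 * t)"
    using exp_ge_add_one_self[of "c / 2 * t"] assms by (simp add: field_simps)
  then have "t * exp (- c * t) \<le> 2 / c * exp (c / 2 * t) * exp (- c * t)"
    by (rule mult_right_mono) simp
  also have "\<dots> = 2 / c * exp (- c / 2 * t)"
    by (simp add: mult.assoc exp_add[symmetric])
  finally show ?thesis .
qed

lemma nn_integral_norm_powr_exp_finite:
  fixes U :: "'a::euclidean_space \<Rightarrow> real"
  assumes p: "p \<ge> 1" and [measurable]: "U \<in> borel_measurable borel"
    and finite: "(\<integral>\<^sup>+ x. ennreal (exp (- U x)) \<partial>lborel) < \<infinity>"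
    and growth: "Liminf at_infinity (\<lambda>x. ereal (U x / norm x powr p)) > 0"
  shows "(\<integral>\<^sup>+ x. ennreal (norm x powr p * exp (- U x)) \<partial>lborel) < \<infinity>"
proof -
  obtain c :: real where "0 < c" and c: "ereal c < Liminf at_infinity (\<lambda>x. ereal (U x / norm x powr p))"
    using ereal_dense2[OF growth] by force
  from less_LiminfD[OF c] obtain R where R: "\<And>x. R \<le> norm x \<Longrightarrow> c < U x / norm x powr p"
    unfolding eventually_at_infinity by auto
  define R' where "R' = max R 1"
  have bound: "norm x powr p * exp (- U x) \<le> R' powr p * exp (- U x) + 2 / c * exp (- c / 2 * norm x)" for x :: 'a
  proof (cases "norm x \<ge> R'")
    case True
    define t where "t = norm x powr p"
    have "norm x \<ge> 1" using True by (simp add: R'_def)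
    then have "t \<ge> norm x"
      using powr_mono[of 1 p "norm x"] p by (simp add: t_def)
    have "t > 0"
      using \<open>norm x \<ge> 1\<close> by (auto simp: t_def)
    then have "U x > c * t"
      using R[of x] True by (simp add: R'_def t_def pos_less_divide_eq)
    then have "t * exp (- U x) \<le> t * exp (- c * t)"
      by (intro mult_left_mono) (auto simp: t_def)
    also have "\<dots> \<le> 2 / c * exp (- c / 2 * t)"
      using \<open>c > 0\<close> by (rule mult_exp_neg_le) (simp add: t_def)
    also have "\<dots> \<le> 2 / c * exp (- c / 2 * norm x)"
      using \<open>t \<ge> norm x\<close> \<open>c > 0\<close> by (intro mult_left_mono) (auto simp: divide_simps)
    finally show ?thesis
      by (simp add: t_def add_increasing)
  next
    case False
    then have "norm x powr p \<le> R' powr p"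
      using p by (intro powr_mono2) auto
    then have "norm x powr p * exp (- U x) \<le> R' powr p * exp (- U x)"
      by (rule mult_right_mono) simp
    then show ?thesis
      using \<open>c > 0\<close> by (simp add: add_increasing2)
  qed
  have "(\<integral>\<^sup>+ x. ennreal (norm x powr p * exp (- U x)) \<partial>lborel) \<le>
      (\<integral>\<^sup>+ x. ennreal (R' powr p) * ennreal (exp (- U x)) + ennreal (2 / c) * ennreal (exp (- c / 2 * norm x)) \<partial>lborel)"
    using bound \<open>c > 0\<close> by (intro nn_integral_mono) (simp add: ennreal_mult[symmetric] ennreal_plus[symmetric] del: ennreal_plus)
  also have "\<dots> = ennreal (R' powr p) * (\<integral>\<^sup>+ x. ennreal (exp (- U x)) \<partial>lborel) +
      ennreal (2 / c) * (\<integral>\<^sup>+ x. ennreal (exp (- c / 2 * norm (x :: 'a))) \<partial>lborel)"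
    by (simp add: nn_integral_add nn_integral_cmult)
  also have "\<dots> < \<infinity>"
    using finite nn_integral_exp_neg_norm_finite[of "c / 2", where 'a='a] \<open>c > 0\<close>
    by (simp add: ennreal_mult_less_top)
  finally show ?thesis .
qed

section \<open>Gibbs measures with bounded potentials\<close>

lemma abs_exp_diff_le:
  fixes s t B :: real
  assumes "s \<le> B" "t \<le> B"
  shows "\<bar>exp s - exp t\<bar> \<le> exp B * \<bar>s - t\<bar>"
proof -
  have *: "exp s - exp t \<le> exp B * (s - t)" if "t \<le> s" "s \<le> B" for s t :: real
  proof -
    have "exp s - exp t = exp s * (1 - exp (t - s))"
      by (simp add: exp_diff field_simps)
    also have "\<dots> \<le> exp s * (s - t)"
      by (intro mult_left_mono) (use exp_ge_add_one_self[of "t - s"] in linarith, simp)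
    also have "\<dots> \<le> exp B * (s - t)"
      using that by (intro mult_right_mono) auto
    finally show ?thesis .
  qed
  show ?thesis
    using *[of t s] *[of s t] assms by (cases "t \<le> s") (auto simp: abs_if)
qed

lemma abs_divide_diff_le:
  fixes E E' Z Z' z e1 e2 e3 :: real
  assumes "z > 0" "Z \<ge> z" "Z' \<ge> z" "\<bar>E - E'\<bar> \<le> e1" "0 \<le> E'" "E' \<le> e2" "\<bar>Z - Z'\<bar> \<le> e3"
  shows "\<bar>E / Z - E' / Z'\<bar> \<le> e1 / z + e2 * e3 / z\<^sup>2"
proof -
  have Z: "Z > 0" "Z' > 0"
    using assms by auto
  have "E / Z - E' / Z' = (E - E') / Z + E' * (Z' - Z) / (Z * Z')"
    using Z by (simp add: field_simps)
  moreover have "\<bar>(E - E') / Z\<bar> \<le> e1 / z"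
    using assms Z by (simp add: frac_le)
  moreover have "\<bar>E' * (Z' - Z) / (Z * Z')\<bar> \<le> e2 * e3 / z\<^sup>2"
  proof -
    have "\<bar>E' * (Z' - Z) / (Z * Z')\<bar> = E' * \<bar>Z - Z'\<bar> / (Z * Z')"
      using Z assms by (simp add: abs_mult abs_minus_commute)
    also have "\<dots> \<le> e2 * e3 / (z * z)"
      using assms Z by (intro frac_le mult_mono mult_pos_pos) auto
    finally show ?thesis
      by (simp add: power2_eq_square)
  qed
  ultimately show ?thesis
    by linarith
qed

definition gibbs_density :: "('a::euclidean_space \<Rightarrow> real) \<Rightarrow> ('a \<Rightarrow> real) \<Rightarrow> 'a \<Rightarrow> real" where
  "gibbs_density U V x = exp (V x - U x) / (\<integral> y. exp (V y - U y) \<partial>lborel)"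

definition gibbs_measure :: "('a::euclidean_space \<Rightarrow> real) \<Rightarrow> ('a \<Rightarrow> real) \<Rightarrow> 'a measure" where
  "gibbs_measure U V = density lborel (\<lambda>x. ennreal (gibbs_density U V x))"

locale gibbs_reference =
  fixes U :: "'a::euclidean_space \<Rightarrow> real"
  assumes measurable_U[measurable]: "U \<in> borel_measurable borel"
    and nn_integral_exp_neg_U: "(\<integral>\<^sup>+ x. ennreal (exp (- U x)) \<partial>lborel) = 1"
begin

lemma integrable_exp_neg_U: "integrable lborel (\<lambda>x. exp (- U x))"
  by (rule integrableI_nonneg) (auto simp: nn_integral_exp_neg_U)

lemma integral_exp_neg_U: "(\<integral> x. exp (- U x) \<partial>lborel) = 1"
  by (subst integral_eq_nn_integral) (auto simp: nn_integral_exp_neg_U)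

context
  fixes V :: "'a \<Rightarrow> real" and B :: real
  assumes measurable_V[measurable]: "V \<in> borel_measurable borel" and V_bound: "\<And>x. \<bar>V x\<bar> \<le> B"
begin

lemma exp_V_minus_U_le: "exp (V x - U x) \<le> exp B * exp (- U x)"
  using V_bound[of x] by (simp add: exp_add[symmetric])

lemma integrable_exp_V_minus_U: "integrable lborel (\<lambda>x. exp (V x - U x))"
  by (rule Bochner_Integration.integrable_bound[OF integrable_mult_right[OF integrable_exp_neg_U, of "exp B"]])
    (auto intro: exp_V_minus_U_le)

lemma partition_function_ge: "(\<integral> x. exp (V x - U x) \<partial>lborel) \<ge> exp (- B)"
proof -
  have "exp (- B) * exp (- U x) \<le> exp (V x - U x)" for x
    using V_bound[of x] by (simp add: exp_add[symmetric])
  then have "(\<integral> x. exp (- B) * exp (- U x) \<partial>lborel) \<le> (\<integral> x. exp (V x - U x) \<partial>lborel)"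
    by (intro integral_mono integrable_exp_V_minus_U integrable_mult_right integrable_exp_neg_U)
  then show ?thesis
    by (simp add: integral_exp_neg_U)
qed

lemma partition_function_pos: "(\<integral> x. exp (V x - U x) \<partial>lborel) > 0"
  using partition_function_ge by (rule less_le_trans[OF exp_gt_zero])

lemma gibbs_density_nonneg: "gibbs_density U V x \<ge> 0"
  using partition_function_pos by (simp add: gibbs_density_def)

lemma measurable_gibbs_density[measurable]: "gibbs_density U V \<in> borel_measurable borel"
  unfolding gibbs_density_def by measurable

lemma nn_integral_gibbs_density: "(\<integral>\<^sup>+ x. ennreal (gibbs_density U V x) \<partial>lborel) = 1"
proof -
  have "(\<integral>\<^sup>+ x. ennreal (gibbs_density U V x) \<partial>lborel) = ennreal (\<integral> x. gibbs_density U V x \<partial>lborel)"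
    unfolding gibbs_density_def
    by (intro nn_integral_eq_integral integrable_divide integrable_exp_V_minus_U)
      (use partition_function_pos in auto)
  then show ?thesis
    using partition_function_pos by (simp add: gibbs_density_def)
qed

lemma gibbs_density_le: "gibbs_density U V x \<le> exp (2 * B) * exp (- U x)"
proof -
  have "gibbs_density U V x \<le> exp B * exp (- U x) / exp (- B)"
    unfolding gibbs_density_def
    using exp_V_minus_U_le partition_function_ge by (intro frac_le) auto
  then show ?thesis
    by (simp add: exp_minus field_simps flip: exp_add)
qed

end

lemma gibbs_density_diff_le:
  assumes mV[measurable]: "V \<in> borel_measurable borel" and mV'[measurable]: "V' \<in> borel_measurable borel"
    and V: "\<And>x. \<bar>V x\<bar> \<le> B" and V': "\<And>x. \<bar>V' x\<bar> \<le> B" and diff: "\<And>x. \<bar>V x - V' x\<bar> \<le> \<delta>"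
  shows "\<bar>gibbs_density U V x - gibbs_density U V' x\<bar> \<le> (exp (2 * B) + exp (4 * B)) * \<delta> * exp (- U x)"
proof -
  have numerator: "\<bar>exp (V y - U y) - exp (V' y - U y)\<bar> \<le> exp B * \<delta> * exp (- U y)" for y
  proof -
    have "\<bar>exp (V y - U y) - exp (V' y - U y)\<bar> = exp (- U y) * \<bar>exp (V y) - exp (V' y)\<bar>"
      by (simp add: exp_diff abs_mult[symmetric] field_simps exp_minus)
    also have "\<dots> \<le> exp (- U y) * (exp B * \<delta>)"
    proof (intro mult_left_mono)
      have "\<bar>exp (V y) - exp (V' y)\<bar> \<le> exp B * \<bar>V y - V' y\<bar>"
        using V[of y] V'[of y] by (intro abs_exp_diff_le) auto
      also have "\<dots> \<le> exp B * \<delta>"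
        using diff[of y] by simp
      finally show "\<bar>exp (V y) - exp (V' y)\<bar> \<le> exp B * \<delta>" .
    qed simp
    finally show ?thesis
      by (simp add: mult_ac)
  qed
  note integrable = integrable_exp_V_minus_U[OF mV V] integrable_exp_V_minus_U[OF mV' V']
  have "(\<integral> y. exp (V y - U y) \<partial>lborel) - (\<integral> y. exp (V' y - U y) \<partial>lborel) =
      (\<integral> y. exp (V y - U y) - exp (V' y - U y) \<partial>lborel)"
    using integrable by (simp add: Bochner_Integration.integral_diff)
  also have "\<bar>\<dots>\<bar> \<le> (\<integral> y. exp B * \<delta> * exp (- U y) \<partial>lborel)"
    using integrable numerator integrable_exp_neg_U by (intro integral_abs_bound_integral) auto
  finally have "\<bar>(\<integral> y. exp (V y - U y) \<partial>lborel) - (\<integral> y. exp (V' y - U y) \<partial>lborel)\<bar> \<le>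
      (\<integral> y. exp B * \<delta> * exp (- U y) \<partial>lborel)" .
  then have denominator: "\<bar>(\<integral> y. exp (V y - U y) \<partial>lborel) - (\<integral> y. exp (V' y - U y) \<partial>lborel)\<bar> \<le> exp B * \<delta>"
    by (simp add: integral_exp_neg_U)
  have "\<bar>gibbs_density U V x - gibbs_density U V' x\<bar> \<le>
      exp B * \<delta> * exp (- U x) / exp (- B) + exp B * exp (- U x) * (exp B * \<delta>) / (exp (- B))\<^sup>2"
    unfolding gibbs_density_def
    using partition_function_ge[OF mV V] partition_function_ge[OF mV' V'] exp_V_minus_U_le[OF mV' V']
    by (intro abs_divide_diff_le numerator denominator) auto
  also have "\<dots> = (exp (2 * B) + exp (4 * B)) * \<delta> * exp (- U x)"
    by (simp add: exp_minus power2_eq_square field_simps flip: exp_add)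
  finally show ?thesis .
qed

lemma prob_p_gibbs_measure:
  assumes mV[measurable]: "V \<in> borel_measurable borel" and V: "\<And>x. \<bar>V x\<bar> \<le> B"
    and moment: "(\<integral>\<^sup>+ x. ennreal (norm x powr p * exp (- U x)) \<partial>lborel) < \<infinity>"
  shows "prob_p p (gibbs_measure U V)"
proof -
  have [measurable]: "gibbs_density U V \<in> borel_measurable borel"
    by (rule measurable_gibbs_density[OF mV V])
  have "prob_space (density lborel (\<lambda>x. ennreal (gibbs_density U V x)))"
    by (rule prob_spaceI)
      (simp add: emeasure_density nn_integral_gibbs_density[OF mV V])
  moreover have "(\<integral>\<^sup>+ x. ennreal (norm x powr p) \<partial>density lborel (\<lambda>x. ennreal (gibbs_density U V x))) =
      (\<integral>\<^sup>+ x. ennreal (gibbs_density U V x) * ennreal (norm x powr p) \<partial>lborel)"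
    by (simp add: nn_integral_density)
  moreover have "\<dots> \<le> (\<integral>\<^sup>+ x. ennreal (exp (2 * B)) * ennreal (norm x powr p * exp (- U x)) \<partial>lborel)"
  proof (intro nn_integral_mono)
    fix x :: 'a
    have "gibbs_density U V x * norm x powr p \<le> exp (2 * B) * (norm x powr p * exp (- U x))"
      using mult_right_mono[OF gibbs_density_le[OF mV V, of x], of "norm x powr p"] by (simp add: mult_ac)
    then show "ennreal (gibbs_density U V x) * ennreal (norm x powr p) \<le>
        ennreal (exp (2 * B)) * ennreal (norm x powr p * exp (- U x))"
      using gibbs_density_nonneg[OF mV V, of x] by (simp add: ennreal_mult[symmetric] ennreal_leI)
  qed
  moreover have "(\<integral>\<^sup>+ x. ennreal (exp (2 * B)) * ennreal (norm x powr p * exp (- U x)) \<partial>lborel) < \<infinity>"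
    using moment by (simp add: nn_integral_cmult ennreal_mult_less_top)
  ultimately show ?thesis
    by (simp add: prob_p_def prob_borel_def gibbs_measure_def)
qed

lemma prob_density_pair_gibbs:
  assumes "V \<in> borel_measurable borel" "\<And>x. \<bar>V x\<bar> \<le> B"
    and "V' \<in> borel_measurable borel" "\<And>x. \<bar>V' x\<bar> \<le> B"
  shows "prob_density_pair (gibbs_density U V) (gibbs_density U V')"
  by unfold_locales
    (simp_all add: measurable_gibbs_density[OF assms(1,2)] measurable_gibbs_density[OF assms(3,4)]
      gibbs_density_nonneg[OF assms(1,2)] gibbs_density_nonneg[OF assms(3,4)]
      nn_integral_gibbs_density[OF assms(1,2)] nn_integral_gibbs_density[OF assms(3,4)])

lemma wass_gibbs_measure_le:
  assumes mV[measurable]: "V \<in> borel_measurable borel" and mV'[measurable]: "V' \<in> borel_measurable borel"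
    and V: "\<And>x. \<bar>V x\<bar> \<le> B" and V': "\<And>x. \<bar>V' x\<bar> \<le> B" and diff: "\<And>x. \<bar>V x - V' x\<bar> \<le> \<delta>"
    and p: "p > 0" and \<mu>: "\<mu> \<ge> 0" and moment: "(\<integral>\<^sup>+ x. ennreal (norm x powr p * exp (- U x)) \<partial>lborel) \<le> ennreal \<mu>"
  shows "enn2real (wass p (gibbs_measure U V) (gibbs_measure U V'))
    \<le> (2 powr p * ((exp (2 * B) + exp (4 * B)) * \<delta> * \<mu>)) powr (1 / p)"
proof -
  interpret prob_density_pair "gibbs_density U V" "gibbs_density U V'"
    using prob_density_pair_gibbs[OF mV V mV' V'] .
  define C where "C = (exp (2 * B) + exp (4 * B)) * \<delta>"
  have "C \<ge> 0"
    using diff[of 0] by (simp add: C_def add_pos_pos)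
  have "(\<integral>\<^sup>+ x. ennreal (norm x powr p * \<bar>gibbs_density U V x - gibbs_density U V' x\<bar>) \<partial>lborel) \<le>
      (\<integral>\<^sup>+ x. ennreal C * ennreal (norm x powr p * exp (- U x)) \<partial>lborel)"
  proof (intro nn_integral_mono)
    fix x :: 'a
    have "norm x powr p * \<bar>gibbs_density U V x - gibbs_density U V' x\<bar> \<le> C * (norm x powr p * exp (- U x))"
      using mult_left_mono[OF gibbs_density_diff_le[OF mV mV' V V' diff, of x], of "norm x powr p"]
      unfolding C_def by (simp add: mult_ac)
    then show "ennreal (norm x powr p * \<bar>gibbs_density U V x - gibbs_density U V' x\<bar>) \<le>
        ennreal C * ennreal (norm x powr p * exp (- U x))"
      using \<open>C \<ge> 0\<close> by (simp add: ennreal_mult[symmetric] ennreal_leI)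
  qed
  also have "\<dots> = ennreal C * (\<integral>\<^sup>+ x. ennreal (norm x powr p * exp (- U x)) \<partial>lborel)"
    by (rule nn_integral_cmult) simp
  also have "\<dots> \<le> ennreal C * ennreal \<mu>"
    using moment by (rule mult_left_mono) simp
  also have "\<dots> = ennreal (C * \<mu>)"
    using \<open>C \<ge> 0\<close> \<mu> by (simp add: ennreal_mult)
  finally show ?thesis
    using wass_density_le[OF p _] \<open>C \<ge> 0\<close> \<mu> by (simp add: C_def gibbs_measure_def)
qed

lemma gibbs_measure_hoelder:
  assumes p: "p > 0" and moment: "(\<integral>\<^sup>+ x. ennreal (norm x powr p * exp (- U x)) \<partial>lborel) < \<infinity>"
    and meas: "\<And>m. prob_p p m \<Longrightarrow> V m \<in> borel_measurable borel"
    and bound: "\<And>m x. prob_p p m \<Longrightarrow> \<bar>V m x\<bar> \<le> B"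
    and lipschitz: "\<And>m m' x. prob_p p m \<Longrightarrow> prob_p p m' \<Longrightarrow> \<bar>V m x - V m' x\<bar> \<le> L * enn2real (wass p m m')"
    and L: "L \<ge> 0"
  shows "\<exists>K>0. \<forall>m m'. prob_p p m \<longrightarrow> prob_p p m' \<longrightarrow>
    enn2real (wass p (gibbs_measure U (V m)) (gibbs_measure U (V m'))) \<le> K * enn2real (wass p m m') powr (1 / p)"
proof -
  obtain \<mu> where "\<mu> \<ge> 0" and moment_eq: "(\<integral>\<^sup>+ x. ennreal (norm x powr p * exp (- U x)) \<partial>lborel) = ennreal \<mu>"
    using moment by (auto simp: less_top_ennreal)
  define A where "A = 2 powr p * (exp (2 * B) + exp (4 * B)) * L * \<mu>"
  have "A \<ge> 0"
    using \<open>\<mu> \<ge> 0\<close> L by (simp add: A_def)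
  have "enn2real (wass p (gibbs_measure U (V m)) (gibbs_measure U (V m'))) \<le>
      (A powr (1 / p) + 1) * enn2real (wass p m m') powr (1 / p)" if "prob_p p m" "prob_p p m'" for m m'
  proof -
    let ?w = "enn2real (wass p m m')"
    have "enn2real (wass p (gibbs_measure U (V m)) (gibbs_measure U (V m'))) \<le>
        (2 powr p * ((exp (2 * B) + exp (4 * B)) * (L * ?w) * \<mu>)) powr (1 / p)"
      using that p \<open>\<mu> \<ge> 0\<close> moment_eq
      by (intro wass_gibbs_measure_le meas bound lipschitz) simp_all
    also have "\<dots> = A powr (1 / p) * ?w powr (1 / p)"
      using \<open>A \<ge> 0\<close> by (simp add: A_def powr_mult[symmetric] mult_ac)
    also have "\<dots> \<le> (A powr (1 / p) + 1) * ?w powr (1 / p)"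
      by (intro mult_right_mono) simp_all
    finally show ?thesis .
  qed
  moreover have "A powr (1 / p) + 1 > 0"
    by (simp add: add_nonneg_pos)
  ultimately show ?thesis
    by blast
qed

end

theorem corollary15:
  fixes F :: "'a::euclidean_space measure \<Rightarrow> real"
    and dF :: "'a measure \<Rightarrow> 'a \<Rightarrow> real"
    and U :: "'a \<Rightarrow> real"
    and p \<sigma> L_F M_F :: real
  assumes p: "p \<ge> 1" and sigma: "\<sigma> > 0"
    and F_nonneg: "\<And>m. prob_borel m \<Longrightarrow> F m \<ge> 0"
    and dF_cont: "\<And>ms m xs x. (\<forall>n. prob_borel (ms n)) \<Longrightarrow> prob_borel m \<Longrightarrow>
         weak_conv ms m \<Longrightarrow> xs \<longlonglongrightarrow> x \<Longrightarrow> (\<lambda>n. dF (ms n) (xs n)) \<longlonglongrightarrow> dF m x"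
    and dF_deriv: "\<And>m0 m1. prob_borel m0 \<Longrightarrow> prob_borel m1 \<Longrightarrow>
         F m1 - F m0 = (LINT l:{0..1}|lborel.
            (\<integral> x. dF (mix l m0 m1) x \<partial>m1) - (\<integral> x. dF (mix l m0 m1) x \<partial>m0))"
    and LF: "L_F > 0" and MF: "M_F > 0"
    and dF_lip: "\<And>m m' x x'. prob_borel m \<Longrightarrow> prob_borel m' \<Longrightarrow>
         ennreal \<bar>dF m x - dF m' x'\<bar> \<le> ennreal L_F * (wass p m m' + ennreal (dist x x'))"
    and dF_bound: "\<And>m x. prob_borel m \<Longrightarrow> \<bar>dF m x\<bar> \<le> M_F"
    and U_meas: "U \<in> borel_measurable borel"
    and U_norm: "(\<integral>\<^sup>+ x. ennreal (exp (- U x)) \<partial>lborel) = 1"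
    and U_essinf: "\<exists>c. AE x in lborel. U x \<ge> c"
    and U_growth: "Liminf at_infinity (\<lambda>x. ereal (U x / norm x powr p)) > 0"
  shows "(\<forall>m. prob_p p m \<longrightarrow> prob_p p (Phi \<sigma> dF U m)) \<and>
         (\<exists>K>0. \<forall>m m'. prob_p p m \<longrightarrow> prob_p p m' \<longrightarrow>
            enn2real (wass p (Phi \<sigma> dF U m) (Phi \<sigma> dF U m'))
              \<le> K * enn2real (wass p m m') powr (1 / p))"
proof -
  interpret gibbs_reference U
    using U_meas U_norm by unfold_locales
  define c where "c = 2 / \<sigma>\<^sup>2"
  define V where "V m = (\<lambda>x. - c * dF m x)" for m
  have "c > 0"
    using sigma by (simp add: c_def)
  have Phi_eq: "Phi \<sigma> dF U m = gibbs_measure U (V m)" for m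
    by (simp add: Phi_def gibbs_measure_def gibbs_density_def V_def c_def Let_def)
  have V_meas: "V m \<in> borel_measurable borel" if "prob_p p m" for m
  proof -
    have "dF m \<in> borel_measurable borel"
      using dF_cont[of "\<lambda>_. m" m] that
      by (intro borel_measurable_sequentially_continuous) (simp add: weak_conv_def prob_p_def)
    then show ?thesis
      unfolding V_def by measurable
  qed
  have V_bound: "\<bar>V m x\<bar> \<le> c * M_F" if "prob_p p m" for m x
    using dF_bound[of m x] that \<open>c > 0\<close> by (simp add: V_def abs_mult prob_p_def)
  have V_lipschitz: "\<bar>V m x - V m' x\<bar> \<le> c * L_F * enn2real (wass p m m')"
    if "prob_p p m" "prob_p p m'" for m m' x
  proof -
    have "\<bar>dF m x - dF m' x\<bar> \<le> L_F * enn2real (wass p m m')"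
      using dF_lip[of m m' x x] wass_finite[OF that] that p LF
      by (intro ennreal_le_mult_imp_le_enn2real) (simp_all add: prob_p_def)
    moreover have "V m x - V m' x = c * (dF m' x - dF m x)"
      by (simp add: V_def algebra_simps)
    ultimately show ?thesis
      using \<open>c > 0\<close> by (simp add: abs_mult abs_minus_commute mult.assoc mult_left_mono)
  qed
  have moment: "(\<integral>\<^sup>+ x. ennreal (norm x powr p * exp (- U x)) \<partial>lborel) < \<infinity>"
    using nn_integral_norm_powr_exp_finite[OF p U_meas _ U_growth] U_norm by simp
  show ?thesis
    unfolding Phi_eq
    using prob_p_gibbs_measure[OF V_meas V_bound moment] p LF \<open>c > 0\<close>
      gibbs_measure_hoelder[OF _ moment V_meas V_bound V_lipschitz]
    by simp
qed

end
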